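(* Let $\alpha,\beta,\mu,\nu>0$, $0<z\le1$, and let $\mathbf a=(a_n)_{n\ge1}$ be a sequence of positive numbers with $a_n\to\infty$ such that $\zeta_{\mu,\nu}(\alpha,\beta,z)<\infty$. Then for all $r>0$, $$2\zeta_{\mu,\nu}(\alpha,\beta,z)\exp\Big\{-\mu\,\frac{\zeta_{\mu+1,\nu}(\alpha,\beta,z)}{\zeta_{\mu,\nu}(\alpha,\beta,z)}\,r^2\Big\}\le S^{(\alpha,\beta)}_{\mu,\nu}(r,\mathbf a;z).$$
   Context: $S_{\mu,\nu}^{(\alpha,\beta)}(r,\mathbf a;z)=\sum_{n=1}^\infty \frac{2a_n^{\beta}(\nu)_n z^n}{(a_n^{\alpha}+r^2)^{\mu}\,n!}$, $(\nu)_n=\Gamma(\nu+n)/\Gamma(\nu)$, and $\zeta_{\mu,\nu}(\alpha,\beta,z)=\sum_{n=1}^\infty\frac{(\nu)_n z^n}{n!\,a_n^{\alpha\mu-\beta}}$. *)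

theory Defs
  imports "HOL-Analysis.Analysis"
begin

text \<open>The series S and zeta, indexed from n = 1 (the sequence a is a function nat => real,
  only the values a 1, a 2, ... matter).\<close>

definition S_term :: "real \<Rightarrow> real \<Rightarrow> real \<Rightarrow> real \<Rightarrow> real \<Rightarrow> (nat \<Rightarrow> real) \<Rightarrow> real \<Rightarrow> nat \<Rightarrow> real" where
  "S_term \<mu> \<nu> \<alpha> \<beta> r a z n =
     2 * a n powr \<beta> * pochhammer \<nu> n * z ^ n / ((a n powr \<alpha> + r\<^sup>2) powr \<mu> * fact n)"

definition S_series :: "real \<Rightarrow> real \<Rightarrow> real \<Rightarrow> real \<Rightarrow> real \<Rightarrow> (nat \<Rightarrow> real) \<Rightarrow> real \<Rightarrow> real" where
  "S_series \<mu> \<nu> \<alpha> \<beta> r a z = (\<Sum>n. S_term \<mu> \<nu> \<alpha> \<beta> r a z (Suc n))"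

definition zeta_term :: "real \<Rightarrow> real \<Rightarrow> real \<Rightarrow> real \<Rightarrow> (nat \<Rightarrow> real) \<Rightarrow> real \<Rightarrow> nat \<Rightarrow> real" where
  "zeta_term \<mu> \<nu> \<alpha> \<beta> a z n =
     pochhammer \<nu> n * z ^ n / (fact n * a n powr (\<alpha> * \<mu> - \<beta>))"

definition zeta_series :: "real \<Rightarrow> real \<Rightarrow> real \<Rightarrow> real \<Rightarrow> (nat \<Rightarrow> real) \<Rightarrow> real \<Rightarrow> real" where
  "zeta_series \<mu> \<nu> \<alpha> \<beta> a z = (\<Sum>n. zeta_term \<mu> \<nu> \<alpha> \<beta> a z (Suc n))"

end

theory Submission
  imports Defs
begin

text \<open>Write \<open>w\<^sub>n\<close> for the terms of \<open>\<zeta>\<^sub>\<mu>\<close> and \<open>t\<^sub>n = r\<^sup>2 / a\<^sub>n\<^sup>\<alpha>\<close>. Then the terms of \<open>S\<close> are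
  \<open>2 w\<^sub>n (1 + t\<^sub>n)\<^sup>-\<^sup>\<mu> \<ge> 2 w\<^sub>n exp (-\<mu> t\<^sub>n)\<close>, and the terms of \<open>\<zeta>\<^sub>\<mu>\<^sub>+\<^sub>1\<close> are \<open>w\<^sub>n t\<^sub>n / r\<^sup>2\<close>.
  Jensen's inequality for \<open>exp\<close> with the probability weights \<open>w\<^sub>n / \<zeta>\<^sub>\<mu>\<close> gives the claim.\<close>

lemma exp_ge_tangent: "exp c * (1 + x - c) \<le> exp (x :: real)"
proof -
  have "exp c * (1 + (x - c)) \<le> exp c * exp (x - c)"
    using exp_ge_add_one_self[of "x - c"] by (intro mult_left_mono) auto
  then show ?thesis by (simp add: exp_diff algebra_simps)
qed

lemma exp_le_one_plus_powr:
  fixes t \<mu> :: real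
  assumes "t > -1" "\<mu> \<ge> 0"
  shows "exp (- \<mu> * t) \<le> (1 + t) powr (- \<mu>)"
proof -
  have "ln (1 + t) \<le> t" using ln_le_minus_one[of "1 + t"] assms(1) by simp
  then have "exp (- \<mu> * t) \<le> exp (- \<mu> * ln (1 + t))"
    using assms(2) by (simp add: mult_left_mono)
  also have "\<dots> = (1 + t) powr (- \<mu>)" using assms(1) by (simp add: powr_def)
  finally show ?thesis .
qed

lemma suminf_exp_jensen:
  fixes w x :: "nat \<Rightarrow> real"
  assumes "\<And>n. w n \<ge> 0" "suminf w > 0"
    and "summable w" "summable (\<lambda>n. w n * x n)" "summable (\<lambda>n. w n * exp (x n))"
  shows "suminf w * exp ((\<Sum>n. w n * x n) / suminf w) \<le> (\<Sum>n. w n * exp (x n))"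
proof -
  define c where "c = (\<Sum>n. w n * x n) / suminf w"
  have tangent: "exp c * (w n + w n * x n - c * w n) \<le> w n * exp (x n)" for n
    using mult_left_mono[OF exp_ge_tangent[of c "x n"] assms(1)[of n]]
    by (simp add: algebra_simps)
  have "(\<lambda>n. exp c * (w n + w n * x n - c * w n))
          sums (exp c * (suminf w + (\<Sum>n. w n * x n) - c * suminf w))"
    using assms(3,4) by (intro sums_mult sums_diff sums_add sums_mult2 summable_sums)
  then have "exp c * (suminf w + (\<Sum>n. w n * x n) - c * suminf w) \<le> (\<Sum>n. w n * exp (x n))"
    using sums_le[OF tangent _ summable_sums[OF assms(5)]] by blast
  then show ?thesis using assms(2) by (simp add: c_def field_simps)
qed

lemma summable_weighted_one_plus_powr:
  fixes w t :: "nat \<Rightarrow> real"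
  assumes "\<And>n. w n \<ge> 0" "\<And>n. t n \<ge> 0" "\<mu> \<ge> 0" "summable w"
  shows "summable (\<lambda>n. w n * (1 + t n) powr (- \<mu>))"
proof (rule summable_comparison_test'[OF assms(4)])
  fix n
  have "(1 + t n) powr \<mu> \<ge> 1" using assms(2,3) by (simp add: ge_one_powr_ge_zero)
  then show "norm (w n * (1 + t n) powr (- \<mu>)) \<le> w n"
    using assms(1)[of n] by (simp add: powr_minus_divide divide_le_eq abs_mult mult_le_cancel_left1)
qed

lemma suminf_weighted_one_plus_powr_ge:
  fixes w t :: "nat \<Rightarrow> real"
  assumes "\<And>n. w n \<ge> 0" "\<And>n. t n \<ge> 0" "\<mu> \<ge> 0" "suminf w > 0"
    and "summable w" "summable (\<lambda>n. w n * t n)"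
  shows "suminf w * exp (- \<mu> * (\<Sum>n. w n * t n) / suminf w) \<le> (\<Sum>n. w n * (1 + t n) powr (- \<mu>))"
proof -
  have exp_le: "w n * exp (- \<mu> * t n) \<le> w n * (1 + t n) powr (- \<mu>)" for n
    using assms(1)[of n] assms(2)[of n] assms(3) by (intro mult_left_mono exp_le_one_plus_powr) auto
  have sum_powr: "summable (\<lambda>n. w n * (1 + t n) powr (- \<mu>))"
    using assms(1-3,5) by (rule summable_weighted_one_plus_powr)
  have sum_exp: "summable (\<lambda>n. w n * exp (- \<mu> * t n))"
    using sum_powr by (rule summable_comparison_test') (use assms(1) exp_le in simp)
  have "(\<Sum>n. w n * (- \<mu> * t n)) = - \<mu> * (\<Sum>n. w n * t n)"
    using suminf_mult[OF assms(6), of "- \<mu>"] by (simp add: algebra_simps)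
  moreover have "suminf w * exp ((\<Sum>n. w n * (- \<mu> * t n)) / suminf w) \<le> (\<Sum>n. w n * exp (- \<mu> * t n))"
    using assms(1,4,5) summable_mult[OF assms(6), of "- \<mu>"] sum_exp
    by (intro suminf_exp_jensen) (simp_all add: algebra_simps)
  ultimately show ?thesis
    using suminf_le[OF exp_le sum_exp sum_powr] by simp
qed

lemma zeta_term_pos:
  assumes "\<nu> > 0" "z > 0" "a n > 0"
  shows "zeta_term \<mu> \<nu> \<alpha> \<beta> a z n > 0"
  using assms by (simp add: zeta_term_def pochhammer_pos)

lemma zeta_term_Suc_mu:
  assumes "a n > 0"
  shows "zeta_term (\<mu> + 1) \<nu> \<alpha> \<beta> a z n = zeta_term \<mu> \<nu> \<alpha> \<beta> a z n / a n powr \<alpha>"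
proof -
  have "a n powr (\<alpha> * (\<mu> + 1) - \<beta>) = a n powr (\<alpha> * \<mu> - \<beta>) * a n powr \<alpha>"
    by (simp add: powr_add[symmetric] algebra_simps)
  then show ?thesis by (simp add: zeta_term_def)
qed

lemma S_term_eq_zeta_term:
  assumes "a n > 0"
  shows "S_term \<mu> \<nu> \<alpha> \<beta> r a z n
           = 2 * zeta_term \<mu> \<nu> \<alpha> \<beta> a z n * (1 + r\<^sup>2 / a n powr \<alpha>) powr (- \<mu>)"
proof -
  let ?A = "a n powr \<alpha>" and ?q = "1 + r\<^sup>2 / a n powr \<alpha>"
  have A: "?A > 0" using assms by simp
  have q: "?q > 0" using A by (simp add: add_pos_nonneg)
  have "(?A + r\<^sup>2) powr \<mu> = a n powr (\<alpha> * \<mu>) * ?q powr \<mu>"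
  proof -
    have "?A + r\<^sup>2 = ?A * ?q" using A by (simp add: field_simps)
    then show ?thesis using A q by (simp add: powr_mult powr_powr)
  qed
  moreover have "a n powr (\<alpha> * \<mu> - \<beta>) = a n powr (\<alpha> * \<mu>) / a n powr \<beta>"
    using assms by (simp add: powr_diff)
  ultimately show ?thesis
    using q assms by (simp add: S_term_def zeta_term_def powr_minus_divide field_simps)
qed

lemma summable_zeta_term_Suc_mu:
  assumes "\<alpha> \<ge> 0" "\<nu> > 0" "z > 0" "\<And>n. n \<ge> 1 \<Longrightarrow> a n > 0"
    and "filterlim a at_top sequentially"
    and "summable (\<lambda>n. zeta_term \<mu> \<nu> \<alpha> \<beta> a z (Suc n))"
  shows "summable (\<lambda>n. zeta_term (\<mu> + 1) \<nu> \<alpha> \<beta> a z (Suc n))"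
proof (rule summable_comparison_test_ev[OF _ assms(6)])
  have "eventually (\<lambda>n. a n \<ge> 1) sequentially"
    using assms(5) by (simp add: filterlim_at_top)
  then have "eventually (\<lambda>n. a (Suc n) \<ge> 1) sequentially"
    by (rule eventually_sequentially_Suc[THEN iffD2])
  then show "eventually (\<lambda>n. norm (zeta_term (\<mu> + 1) \<nu> \<alpha> \<beta> a z (Suc n))
                              \<le> zeta_term \<mu> \<nu> \<alpha> \<beta> a z (Suc n)) sequentially"
  proof eventually_elim
    case (elim n)
    have "a (Suc n) powr \<alpha> \<ge> 1" using elim assms(1) by (simp add: ge_one_powr_ge_zero)
    moreover have "zeta_term \<mu> \<nu> \<alpha> \<beta> a z (Suc n) > 0"
      using assms(2-4) by (intro zeta_term_pos) auto
    ultimately show ?case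
      using assms(4)[of "Suc n"] by (simp add: zeta_term_Suc_mu divide_le_eq mult_le_cancel_left1)
  qed
qed

theorem mainTheorem8:
  fixes \<alpha> \<beta> \<mu> \<nu> z r :: real and a :: "nat \<Rightarrow> real"
  assumes "\<alpha> > 0" and "\<beta> > 0" and "\<mu> > 0" and "\<nu> > 0"
    and "0 < z" and "z \<le> 1"
    and "\<And>n. n \<ge> 1 \<Longrightarrow> a n > 0"
    and "filterlim a at_top sequentially"
    and "summable (\<lambda>n. zeta_term \<mu> \<nu> \<alpha> \<beta> a z (Suc n))"
    and "r > 0"
  shows "2 * zeta_series \<mu> \<nu> \<alpha> \<beta> a z *
           exp (- \<mu> * (zeta_series (\<mu> + 1) \<nu> \<alpha> \<beta> a z / zeta_series \<mu> \<nu> \<alpha> \<beta> a z) * r\<^sup>2)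
         \<le> S_series \<mu> \<nu> \<alpha> \<beta> r a z"
proof -
  define w where "w n = zeta_term \<mu> \<nu> \<alpha> \<beta> a z (Suc n)" for n
  define t where "t n = r\<^sup>2 / a (Suc n) powr \<alpha>" for n
  have a_pos: "a (Suc n) > 0" for n using assms(7) by simp
  have w_pos: "w n > 0" for n unfolding w_def using assms(4,5) a_pos by (rule zeta_term_pos)
  have t_nonneg: "t n \<ge> 0" for n by (simp add: t_def)
  have sum_w: "summable w" using assms(9) unfolding w_def .
  have Z: "zeta_series \<mu> \<nu> \<alpha> \<beta> a z = suminf w" unfolding zeta_series_def w_def ..
  have sum_v: "summable (\<lambda>n. zeta_term (\<mu> + 1) \<nu> \<alpha> \<beta> a z (Suc n))"
    using assms(1,4,5,7,8,9) by (intro summable_zeta_term_Suc_mu) auto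
  have wt: "w n * t n = r\<^sup>2 * zeta_term (\<mu> + 1) \<nu> \<alpha> \<beta> a z (Suc n)" for n
    using zeta_term_Suc_mu[of a "Suc n"] a_pos by (simp add: w_def t_def)
  have "suminf w * exp (- \<mu> * (r\<^sup>2 * zeta_series (\<mu> + 1) \<nu> \<alpha> \<beta> a z) / suminf w)
          \<le> (\<Sum>n. w n * (1 + t n) powr (- \<mu>))"
    using suminf_weighted_one_plus_powr_ge[of w t \<mu>] w_pos t_nonneg assms(3) sum_w sum_v
      suminf_pos[OF sum_w w_pos] suminf_mult[OF sum_v, of "r\<^sup>2"]
    by (simp add: wt zeta_series_def less_imp_le)
  also have "\<dots> = S_series \<mu> \<nu> \<alpha> \<beta> r a z / 2"
  proof -
    have "S_term \<mu> \<nu> \<alpha> \<beta> r a z (Suc n) = 2 * (w n * (1 + t n) powr (- \<mu>))" for n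
      using S_term_eq_zeta_term[of a "Suc n"] a_pos by (simp add: w_def t_def)
    moreover have "summable (\<lambda>n. w n * (1 + t n) powr (- \<mu>))"
      using w_pos t_nonneg assms(3) sum_w by (intro summable_weighted_one_plus_powr) (auto intro: less_imp_le)
    ultimately show ?thesis by (simp add: S_series_def suminf_mult)
  qed
  finally show ?thesis by (simp add: Z algebra_simps)
qed

end
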